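(* Let $X$ be a vector space, $S$ a proper subset of $X$ with $0\in S$, $p:X\to\mathbb{R}$ a sub-linear functional, and $F:S\to\mathbb{R}$ with $F(0)=0$ and $F(s_1)+F(s_2)\le p(s_1+s_2)$ for all $s_1,s_2\in S$. Then $F$ has an extension $\hat F:X\to\mathbb{R}$ with $\hat F(s)=F(s)$ for $s\in S$ and $\hat F(x_1)+\hat F(x_2)\le p(x_1+x_2)$ for all $x_1,x_2\in X$.
   Context: $X$ is a vector space over $K\in\{\mathbb{R},\mathbb{C}\}$. A functional $p$ is sub-linear if $p(x+y)\le p(x)+p(y)$ and $p(tx)=tp(x)$ for all $x,y\in X$ and $t\ge0$. *)

theory Defs
  imports "HOL-Analysis.Analysis"
begin

definition sublinear :: "('a::real_vector \<Rightarrow> real) \<Rightarrow> bool" where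
  "sublinear p \<longleftrightarrow> (\<forall>x y. p (x + y) \<le> p x + p y) \<and> (\<forall>x (t::real). t \<ge> 0 \<longrightarrow> p (t *\<^sub>R x) = t * p x)"

end

theory Submission
  imports Defs
begin

(* Extend F by x \<mapsto> - p (- x) outside S. Subadditivity of p alone then gives all four cases of
   the required inequality. *)

definition minorant_extension :: "'a set \<Rightarrow> ('a \<Rightarrow> real) \<Rightarrow> ('a::uminus \<Rightarrow> real) \<Rightarrow> 'a \<Rightarrow> real" where
  "minorant_extension S F p x = (if x \<in> S then F x else - p (- x))"

lemma subadditive_minus_le:
  fixes p :: "'a::ab_group_add \<Rightarrow> real"
  assumes subadd: "\<And>x y. p (x + y) \<le> p x + p y"
  shows "- p (- x) \<le> p x"
proof -
  have "p 0 \<ge> 0" using subadd[of 0 0] by simp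
  moreover have "p 0 \<le> p x + p (- x)" using subadd[of x "- x"] by simp
  ultimately show ?thesis by linarith
qed

lemma minorant_extension_add_le:
  fixes p F :: "'a::ab_group_add \<Rightarrow> real"
  assumes subadd: "\<And>x y. p (x + y) \<le> p x + p y"
    and "0 \<in> S" and "F 0 = 0"
    and F_le: "\<forall>s1\<in>S. \<forall>s2\<in>S. F s1 + F s2 \<le> p (s1 + s2)"
  shows "minorant_extension S F p x1 + minorant_extension S F p x2 \<le> p (x1 + x2)"
proof -
  have F_le_p: "F s \<le> p s" if "s \<in> S" for s
    using F_le \<open>0 \<in> S\<close> \<open>F 0 = 0\<close> that by fastforce
  show ?thesis
  proof (cases "x1 \<in> S"; cases "x2 \<in> S")
    assume "x1 \<in> S" "x2 \<in> S"
    then show ?thesis using F_le by (simp add: minorant_extension_def)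
  next
    assume "x1 \<in> S" "x2 \<notin> S"
    moreover have "p x1 \<le> p (x1 + x2) + p (- x2)" using subadd[of "x1 + x2" "- x2"] by simp
    ultimately show ?thesis using F_le_p[of x1] by (simp add: minorant_extension_def)
  next
    assume "x1 \<notin> S" "x2 \<in> S"
    moreover have "p x2 \<le> p (x1 + x2) + p (- x1)"
      using subadd[of "x1 + x2" "- x1"] by (simp add: algebra_simps)
    ultimately show ?thesis using F_le_p[of x2] by (simp add: minorant_extension_def)
  next
    assume "x1 \<notin> S" "x2 \<notin> S"
    moreover have "p (- (x1 + x2)) \<le> p (- x1) + p (- x2)"
      using subadd[of "- x1" "- x2"] by (simp add: algebra_simps)
    ultimately show ?thesis
      using subadditive_minus_le[OF subadd, of "x1 + x2"] by (simp add: minorant_extension_def)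
  qed
qed

theorem corollary2:
  fixes S :: "'a::real_vector set" and p :: "'a \<Rightarrow> real" and F :: "'a \<Rightarrow> real"
  assumes "S \<subset> UNIV" and "0 \<in> S"
    and "sublinear p"
    and "F 0 = 0"
    and "\<forall>s1\<in>S. \<forall>s2\<in>S. F s1 + F s2 \<le> p (s1 + s2)"
  shows "\<exists>Fh :: 'a \<Rightarrow> real. (\<forall>s\<in>S. Fh s = F s) \<and> (\<forall>x1 x2. Fh x1 + Fh x2 \<le> p (x1 + x2))"
proof (intro exI conjI allI ballI)
  have subadd: "\<And>x y. p (x + y) \<le> p x + p y"
    using \<open>sublinear p\<close> unfolding sublinear_def by blast
  show "minorant_extension S F p x1 + minorant_extension S F p x2 \<le> p (x1 + x2)" for x1 x2
    using minorant_extension_add_le[OF subadd assms(2,4,5)] .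
  show "minorant_extension S F p s = F s" if "s \<in> S" for s
    using that by (simp add: minorant_extension_def)
qed

end
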